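(* For $n \geq 1$ let $P_n(x) = (x^2-x-1)x^n + 1$ and let $C_n$ be the convex hull of the set of roots $q'$ of $P_n$ with $|q'|<1$. Then for every $\varepsilon > 0$ there exists $N$ such that for all $n > N$, \[ \{z \in \mathbb{C} : |z| \leq 1-\varepsilon\} \subset C_n \subset \{z \in \mathbb{C}: |z| \leq 1\}. \] *)

theory Defs
  imports "HOL-Analysis.Analysis"
begin

definition P :: "nat \<Rightarrow> complex \<Rightarrow> complex" where
  "P n x = (x\<^sup>2 - x - 1) * x ^ n + 1"

definition C :: "nat \<Rightarrow> complex set" where
  "C n = convex hull {q. P n q = 0 \<and> norm q < 1}"

end

(* A root of P n in the open unit disc is a solution of x^n = -1 / (x^2 - x - 1). On the unit
   circle |u^2 - u - 1|^2 = 1 + 4 (Im u)^2, so for |Im u| >= s the right-hand side has modulus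
   below 1 on a small disc around u, and Brouwer's fixed point theorem applied to a branch of
   its n-th root, x |-> u exp (Log (-1 / (u^n (x^2 - x - 1))) / n), gives such a root within
   O(1/n) of u. Every direction v has such a u with <v, u> close to 1, so the convex hull of
   the roots meets every supporting half-plane of the disc of radius 1 - epsilon and therefore
   contains it; the outer inclusion holds because all these roots lie in the unit disc. *)

theory Submission
  imports Defs "HOL-Complex_Analysis.Weierstrass_Factorization"
begin

lemma norm_quadratic_sq_on_circle:
  fixes u :: complex
  assumes "norm u = 1"
  shows "(norm (u\<^sup>2 - u - 1))\<^sup>2 = 1 + 4 * (Im u)\<^sup>2"
proof -
  have circle: "(Re u)\<^sup>2 + (Im u)\<^sup>2 = 1"
    using assms by (metis cmod_power2 one_power2)
  have "Re (u\<^sup>2 - u - 1) = (Re u)\<^sup>2 - (Im u)\<^sup>2 - Re u - 1"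
    and "Im (u\<^sup>2 - u - 1) = 2 * Re u * Im u - Im u"
    by (simp_all add: power2_eq_square)
  then have "(norm (u\<^sup>2 - u - 1))\<^sup>2 = ((Re u)\<^sup>2 - (Im u)\<^sup>2 - Re u - 1)\<^sup>2 + (2 * Re u * Im u - Im u)\<^sup>2"
    by (simp only: cmod_power2)
  also have "\<dots> = 1 + 4 * (Im u)\<^sup>2"
    using circle by algebra
  finally show ?thesis .
qed

lemma norm_quadratic_on_circle_ge:
  fixes u :: complex and s :: real
  assumes "norm u = 1" and "s \<le> \<bar>Im u\<bar>" and "0 \<le> s" and "s \<le> 1"
  shows "1 + s\<^sup>2 \<le> norm (u\<^sup>2 - u - 1)"
proof -
  have "s\<^sup>2 * s\<^sup>2 \<le> s\<^sup>2"
    using assms(3,4) by (intro mult_left_le power_le_one) auto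
  moreover have "(1 + s\<^sup>2)\<^sup>2 = 1 + 2 * s\<^sup>2 + s\<^sup>2 * s\<^sup>2"
    by (simp add: power2_eq_square algebra_simps)
  ultimately have "(1 + s\<^sup>2)\<^sup>2 \<le> 1 + 4 * s\<^sup>2"
    using zero_le_power2[of s] by linarith
  also have "\<dots> \<le> 1 + 4 * (Im u)\<^sup>2"
    using assms(2,3) power_mono[of s "\<bar>Im u\<bar>" 2] by simp
  also have "\<dots> = (norm (u\<^sup>2 - u - 1))\<^sup>2"
    using norm_quadratic_sq_on_circle[OF assms(1)] by simp
  finally show ?thesis
    by (simp add: power2_le_iff_abs_le)
qed

lemma norm_quadratic_diff_le:
  fixes u x :: complex and e :: real
  assumes "norm u = 1" and "norm (x - u) \<le> e" and "e \<le> 1"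
  shows "norm ((x\<^sup>2 - x - 1) - (u\<^sup>2 - u - 1)) \<le> 4 * e"
proof -
  have "0 \<le> e"
    using norm_ge_zero assms(2) by (rule order_trans)
  have "norm x \<le> 1 + e"
    using norm_triangle_ineq2[of x u] assms(1,2) by simp
  then have "norm (x + u - 1) \<le> 3 + e"
    using norm_triangle_ineq4[of "x + u" 1] norm_triangle_ineq[of x u] assms(1) by simp
  have "(x\<^sup>2 - x - 1) - (u\<^sup>2 - u - 1) = (x - u) * (x + u - 1)"
    by (simp add: power2_eq_square algebra_simps)
  then have "norm ((x\<^sup>2 - x - 1) - (u\<^sup>2 - u - 1)) = norm (x - u) * norm (x + u - 1)"
    by (simp add: norm_mult)
  also have "\<dots> \<le> e * (3 + e)"
    using assms(2) \<open>0 \<le> e\<close> \<open>norm (x + u - 1) \<le> 3 + e\<close> by (intro mult_mono) auto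
  also have "\<dots> \<le> 4 * e"
    using mult_left_le[OF assms(3) \<open>0 \<le> e\<close>] by (simp add: algebra_simps)
  finally show ?thesis .
qed

lemma exists_fixed_point_exp_near:
  fixes u :: complex and g :: "complex \<Rightarrow> complex"
  assumes "norm u = 1" and "0 < e" and "continuous_on (cball u e) g"
    and g_bound: "\<And>x. x \<in> cball u e \<Longrightarrow> norm (g x) \<le> B"
    and "0 < n" and "2 * B \<le> real n" and "3 * B \<le> 2 * e * real n"
  shows "\<exists>x\<in>cball u e. x = u * exp (g x / of_nat n)"
proof -
  define T where "T x = u * exp (g x / of_nat n)" for x
  have "T x \<in> cball u e" if "x \<in> cball u e" for x
  proof -
    have z_bound: "norm (g x / of_nat n) \<le> B / real n"
      using g_bound[OF that] by (simp add: norm_divide divide_right_mono)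
    also have "B / real n \<le> 1/2"
      using assms(5,6) by (simp add: field_simps)
    finally have "norm (exp (g x / of_nat n) - 1) \<le> 3/2 * norm (g x / of_nat n)"
      by (rule norm_exp_bounds)
    also have "\<dots> \<le> 3/2 * (B / real n)"
      using z_bound by simp
    also have "\<dots> \<le> e"
      using assms(5,7) by (simp add: field_simps)
    moreover have "u - T x = u * (1 - exp (g x / of_nat n))"
      by (simp add: T_def algebra_simps)
    ultimately show ?thesis
      using assms(1) by (simp add: dist_norm norm_mult norm_minus_commute)
  qed
  moreover have "continuous_on (cball u e) T"
    unfolding T_def using assms(5) by (intro continuous_intros assms(3)) auto
  ultimately obtain x where "x \<in> cball u e" "T x = x"
    using brouwer_ball[OF assms(2), where f = T] by blast
  then show ?thesis
    unfolding T_def by metis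
qed

lemma notin_nonpos_Reals_if_norm_diff_one_lt:
  fixes z :: complex
  assumes "norm (z - 1) < 1"
  shows "z \<notin> \<real>\<^sub>\<le>\<^sub>0"
proof -
  have "\<bar>Re z - 1\<bar> < 1"
    using abs_Re_le_cmod[of "z - 1"] assms by simp
  then show ?thesis
    by (simp add: complex_nonpos_Reals_iff)
qed

lemma norm_Ln_le_if_norm_between:
  fixes z :: complex
  assumes "1/3 \<le> norm z" and "norm z \<le> 3"
  shows "norm (Ln z) \<le> 6"
proof -
  have "z \<noteq> 0"
    using assms(1) by auto
  have "ln 3 \<le> (2::real)"
    using ln_le_minus_one[of 3] by simp
  moreover have "ln (norm z) \<le> ln 3" "ln (1/3) \<le> ln (norm z)"
    using assms \<open>z \<noteq> 0\<close> by simp_all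
  moreover have "ln (1/3) = - ln (3::real)"
    by (simp add: ln_div)
  ultimately have "\<bar>Re (Ln z)\<bar> \<le> 2"
    unfolding Re_Ln[OF \<open>z \<noteq> 0\<close>] abs_le_iff by linarith
  moreover have "\<bar>Im (Ln z)\<bar> \<le> pi"
    using mpi_less_Im_Ln[OF \<open>z \<noteq> 0\<close>] Im_Ln_le_pi[OF \<open>z \<noteq> 0\<close>] by linarith
  ultimately show ?thesis
    using cmod_le[of "Ln z"] pi_less_4 by linarith
qed

lemma exists_power_eq_near:
  fixes u :: complex and f :: "complex \<Rightarrow> complex"
  assumes u: "norm u = 1" and e: "0 < e" "e \<le> 1" and n: "21 \<le> e * real n"
    and f_cont: "continuous_on (cball u e) f"
    and fu: "1/3 \<le> norm (f u)" "norm (f u) \<le> 3"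
    and ratio: "\<And>x. x \<in> cball u e \<Longrightarrow> norm (f x / f u - 1) < 1/2"
  shows "\<exists>x\<in>cball u e. x ^ n = f x"
proof -
  have "u \<noteq> 0" "f u \<noteq> 0"
    using u fu(1) by auto
  define c where "c = f u / u ^ n"
  \<comment> \<open>Taking the logarithm in two pieces keeps the varying one near 1, away from the branch cut.\<close>
  define g where "g x = Ln c + Ln (f x / f u)" for x
  have Ln_c: "norm (Ln c) \<le> 6"
    using fu u by (intro norm_Ln_le_if_norm_between) (simp_all add: c_def norm_divide norm_power)
  have Ln_ratio: "norm (Ln (f x / f u)) \<le> 1" if "x \<in> cball u e" for x
    using norm_Ln_le[of "f x / f u - 1"] ratio[OF that] by simp
  have "f x / f u \<notin> \<real>\<^sub>\<le>\<^sub>0" if "x \<in> cball u e" for x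
    using ratio[OF that] by (intro notin_nonpos_Reals_if_norm_diff_one_lt) simp
  moreover have ratio_cont: "continuous_on (cball u e) (\<lambda>x. f x / f u)"
    using \<open>f u \<noteq> 0\<close> by (intro continuous_intros f_cont) auto
  ultimately have g_cont: "continuous_on (cball u e) g"
    unfolding g_def using f_cont
    by (intro continuous_intros continuous_on_compose2[OF continuous_on_Ln ratio_cont]) auto
  have g_bound: "norm (g x) \<le> 7" if "x \<in> cball u e" for x
    using norm_triangle_ineq[of "Ln c" "Ln (f x / f u)"] Ln_c Ln_ratio[OF that]
    by (simp add: g_def)
  have "e * real n \<le> real n"
    using mult_right_mono[OF e(2), of "real n"] by simp
  then have "0 < n" "2 * 7 \<le> real n" "3 * 7 \<le> 2 * e * real n"
    using n by auto
  then obtain x where x: "x \<in> cball u e" "x = u * exp (g x / of_nat n)"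
    using exists_fixed_point_exp_near[OF u e(1) g_cont g_bound] by blast
  have "x ^ n = (u * exp (g x / of_nat n)) ^ n"
    using x(2) by (rule arg_cong)
  also have "\<dots> = u ^ n * exp (g x)"
    using \<open>0 < n\<close> by (simp add: power_mult_distrib exp_of_nat_mult[symmetric])
  also have "\<dots> = f x"
  proof -
    have "f x \<noteq> 0"
      using ratio[OF x(1)] by auto
    then show ?thesis
      using \<open>u \<noteq> 0\<close> \<open>f u \<noteq> 0\<close> by (simp add: g_def exp_add c_def)
  qed
  finally show ?thesis
    using x(1) by blast
qed

lemma norm_quadratic_near_circle_ge:
  fixes u x :: complex and s e :: real
  assumes "norm u = 1" and "s \<le> \<bar>Im u\<bar>" and "0 \<le> s" and "s \<le> 1"
    and "norm (x - u) \<le> e" and "e \<le> s\<^sup>2 / 10"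
  shows "1 + s\<^sup>2 / 2 \<le> norm (x\<^sup>2 - x - 1)"
proof -
  have "e \<le> 1"
    using assms(3,4,6) power_le_one[of s 2] by simp
  then have "norm ((x\<^sup>2 - x - 1) - (u\<^sup>2 - u - 1)) \<le> 4 * e"
    using norm_quadratic_diff_le assms(1,5) by blast
  then show ?thesis
    using norm_quadratic_on_circle_ge[OF assms(1-4)] assms(6) zero_le_power2[of s]
      norm_triangle_ineq3[of "x\<^sup>2 - x - 1" "u\<^sup>2 - u - 1"]
    by linarith
qed

lemma P_root_near:
  fixes u :: complex and s e :: real
  assumes u: "norm u = 1" and s: "s \<le> \<bar>Im u\<bar>" "0 < s" "s \<le> 1"
    and e: "0 < e" "e \<le> s\<^sup>2 / 10" and n: "21 \<le> e * real n"
  shows "\<exists>x. P n x = 0 \<and> norm x < 1 \<and> norm (x - u) \<le> e"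
proof -
  define q where "q x = x\<^sup>2 - x - 1" for x :: complex
  define f where "f x = - 1 / q x" for x
  have "s\<^sup>2 \<le> 1"
    using s by (simp add: power_le_one)
  then have "e \<le> 1"
    using e by simp
  have near: "norm (x - u) \<le> e" if "x \<in> cball u e" for x
    using that by (simp add: dist_norm norm_minus_commute)
  have q_x_gt_1: "1 < norm (q x)" if "x \<in> cball u e" for x
    using norm_quadratic_near_circle_ge[OF u s(1) order_less_imp_le[OF s(2)] s(3) near[OF that] e(2)]
      zero_less_power[OF s(2), of 2]
    unfolding q_def by linarith
  then have q_nonzero: "q x \<noteq> 0" if "x \<in> cball u e" for x
    using that by fastforce
  have "continuous_on (cball u e) f"
    using q_nonzero unfolding f_def q_def by (intro continuous_intros) auto
  moreover have "1/3 \<le> norm (f u)" "norm (f u) \<le> 3"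
  proof -
    have "norm (q u) \<le> 3"
      unfolding q_def using norm_triangle_ineq4[of "u\<^sup>2" u] norm_triangle_ineq4[of "u\<^sup>2 - u" 1] u
      by (simp add: norm_power)
    moreover have "1 < norm (q u)"
      using q_x_gt_1[of u] e(1) by simp
    moreover from this have "0 < norm (q u)"
      by linarith
    ultimately show "1/3 \<le> norm (f u)" "norm (f u) \<le> 3"
      by (simp_all add: f_def norm_divide field_simps)
  qed
  moreover have "norm (f x / f u - 1) < 1/2" if "x \<in> cball u e" for x
  proof -
    have "f x / f u - 1 = (q u - q x) / q x"
      using q_nonzero[OF that] q_nonzero[of u] e(1) by (simp add: f_def field_simps)
    then have "norm (f x / f u - 1) = norm (q x - q u) / norm (q x)"
      by (simp add: norm_divide norm_minus_commute)
    also have "\<dots> \<le> norm (q x - q u)"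
      using q_x_gt_1[OF that] by (simp add: divide_le_eq mult_le_cancel_left1 order_less_imp_le)
    also have "\<dots> \<le> 4 * e"
      using norm_quadratic_diff_le[OF u near[OF that] \<open>e \<le> 1\<close>] by (simp add: q_def)
    finally show ?thesis
      using e(2) \<open>s\<^sup>2 \<le> 1\<close> by linarith
  qed
  ultimately obtain x where x: "x \<in> cball u e" "x ^ n = f x"
    using exists_power_eq_near[OF u e(1) \<open>e \<le> 1\<close> n] by blast
  have "P n x = 0"
    using x(2) q_nonzero[OF x(1)] by (simp add: P_def f_def q_def)
  moreover have "norm x ^ n < 1"
    using x(2) q_x_gt_1[OF x(1)] by (simp add: f_def norm_power[symmetric] norm_divide divide_less_eq)
  ultimately show ?thesis
    using near[OF x(1)] by (auto simp: power_less_one_iff)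
qed

lemma exists_unit_Im_ge_inner_ge:
  fixes v :: complex and s :: real
  assumes v: "norm v = 1" and s: "0 \<le> s" "s \<le> 1"
  shows "\<exists>u. norm u = 1 \<and> s \<le> \<bar>Im u\<bar> \<and> 1 - s\<^sup>2 \<le> inner v u"
proof (cases "s \<le> \<bar>Im v\<bar>")
  case True
  have "inner v v = 1"
    using v by (simp add: power2_norm_eq_inner[symmetric])
  then show ?thesis
    using True v by (intro exI[of _ v]) simp
next
  case False
  define a where "a = (if 0 \<le> Re v then 1 else -1 :: real)"
  define b where "b = (if 0 \<le> Im v then 1 else -1 :: real)"
  define u where "u = Complex (a * sqrt (1 - s\<^sup>2)) (b * s)"
  have "s\<^sup>2 \<le> 1"
    using s by (simp add: power_le_one)
  have "(norm u)\<^sup>2 = 1"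
    using \<open>s\<^sup>2 \<le> 1\<close> by (simp add: u_def a_def b_def cmod_power2 power_mult_distrib)
  then have "norm u = 1"
    using norm_ge_zero[of u] by (auto simp: power2_eq_1_iff)
  moreover have "s \<le> \<bar>Im u\<bar>"
    using s by (simp add: u_def b_def)
  moreover have "1 - s\<^sup>2 \<le> inner v u"
  proof -
    have "(Re v)\<^sup>2 + (Im v)\<^sup>2 = 1"
      using v by (metis cmod_power2 one_power2)
    moreover have "(Im v)\<^sup>2 \<le> s\<^sup>2"
      using False s by (simp add: power2_le_iff_abs_le)
    ultimately have "sqrt (1 - s\<^sup>2) \<le> \<bar>Re v\<bar>"
      by (simp add: real_le_lsqrt)
    have "1 - s\<^sup>2 = sqrt (1 - s\<^sup>2) * sqrt (1 - s\<^sup>2)"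
      using \<open>s\<^sup>2 \<le> 1\<close> by simp
    also have "\<dots> \<le> \<bar>Re v\<bar> * sqrt (1 - s\<^sup>2)"
      using \<open>sqrt (1 - s\<^sup>2) \<le> \<bar>Re v\<bar>\<close> \<open>s\<^sup>2 \<le> 1\<close> by (intro mult_right_mono) auto
    also have "\<dots> \<le> \<bar>Re v\<bar> * sqrt (1 - s\<^sup>2) + \<bar>Im v\<bar> * s"
      using s by simp
    also have "\<dots> = inner v u"
      unfolding u_def a_def b_def inner_complex_def by auto
    finally show ?thesis .
  qed
  ultimately show ?thesis
    by blast
qed

lemma cball_subset_if_support_ge:
  fixes K :: "'a::euclidean_space set"
  assumes "convex K" and "closed K"
    and support: "\<And>v. norm v = 1 \<Longrightarrow> \<exists>x\<in>K. r \<le> inner v x"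
  shows "cball 0 r \<subseteq> K"
proof
  fix z :: 'a
  assume "z \<in> cball 0 r"
  show "z \<in> K"
  proof (rule ccontr)
    assume "z \<notin> K"
    then obtain a b where ab: "inner a z < b" "\<forall>x\<in>K. b < inner a x"
      using separating_hyperplane_closed_point[OF assms(1,2)] by blast
    show False
    proof (cases "a = 0")
      case True
      obtain i :: 'a where "i \<in> Basis"
        using nonempty_Basis by blast
      then obtain x where "x \<in> K"
        using support[of i] by auto
      then show False
        using ab True by auto
    next
      case False
      define v where "v = - (1 / norm a) *\<^sub>R a"
      have v_inner: "inner v y = - inner a y / norm a" for y
        by (simp add: v_def)
      obtain x where "x \<in> K" "r \<le> inner v x"
        using support[of v] False by (auto simp: v_def)
      have "inner a z < inner a x"
        using ab \<open>x \<in> K\<close> by fastforce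
      then have "inner v x < inner v z"
        using False by (simp add: v_inner divide_strict_right_mono)
      also have "\<dots> \<le> norm v * norm z"
        by (rule norm_cauchy_schwarz)
      also have "\<dots> \<le> r"
        using \<open>z \<in> cball 0 r\<close> False by (simp add: v_def)
      finally show False
        using \<open>r \<le> inner v x\<close> by simp
    qed
  qed
qed

lemma finite_P_roots:
  assumes "0 < n"
  shows "finite {q. P n q = 0}"
proof -
  define p where "p = [:-1, -1, 1:] * monom (1::complex) n + 1"
  have poly_p: "poly p x = P n x" for x
    by (simp add: p_def P_def poly_monom power2_eq_square algebra_simps)
  have "poly p 0 = 1"
    using assms by (simp add: poly_p P_def)
  then have "p \<noteq> 0"
    by auto
  then show ?thesis
    using poly_roots_finite[of p] by (simp add: poly_p)
qed

lemma compact_C: "0 < n \<Longrightarrow> compact (C n)"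
  unfolding C_def using finite_P_roots by (intro finite_imp_compact_convex_hull) auto

lemma C_subset_unit_cball: "C n \<subseteq> cball 0 1"
  unfolding C_def by (rule hull_minimal) auto

lemma C_support_ge:
  fixes v :: complex and s e :: real
  assumes "norm v = 1" and s: "0 < s" "s \<le> 1"
    and e: "0 < e" "e \<le> s\<^sup>2 / 10" and n: "21 \<le> e * real n"
  shows "\<exists>x\<in>C n. 1 - s\<^sup>2 - e \<le> inner v x"
proof -
  obtain u where u: "norm u = 1" "s \<le> \<bar>Im u\<bar>" "1 - s\<^sup>2 \<le> inner v u"
    using exists_unit_Im_ge_inner_ge[of v s] assms(1) s by auto
  then obtain x where x: "P n x = 0" "norm x < 1" "norm (x - u) \<le> e"
    using P_root_near[OF u(1,2) s e n] by blast
  have "inner v (u - x) \<le> norm v * norm (u - x)"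
    by (rule norm_cauchy_schwarz)
  also have "\<dots> \<le> e"
    using assms(1) x(3) norm_minus_commute[of u x] by simp
  finally have "1 - s\<^sup>2 - e \<le> inner v x"
    using u(3) by (simp add: inner_diff_right)
  moreover have "x \<in> C n"
    unfolding C_def by (rule hull_inc) (simp add: x(1,2))
  ultimately show ?thesis
    by blast
qed

theorem theorem4p3:
  fixes \<epsilon> :: real
  assumes "\<epsilon> > 0"
  shows "\<exists>N::nat. \<forall>n>N. cball 0 (1 - \<epsilon>) \<subseteq> C n \<and> C n \<subseteq> cball 0 1"
proof -
  define s where "s = min (1/2) (\<epsilon>/2)"
  define e where "e = s\<^sup>2 / 10"
  have s: "0 < s" "s \<le> 1" and "s \<le> 1/2" "s \<le> \<epsilon>/2" and "0 < e"
    using assms by (auto simp: s_def e_def)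
  have "s\<^sup>2 \<le> s / 2"
    using s \<open>s \<le> 1/2\<close> by (simp add: power2_eq_square mult_left_le)
  then have "1 - \<epsilon> \<le> 1 - s\<^sup>2 - e"
    using \<open>s \<le> \<epsilon>/2\<close> assms unfolding e_def by linarith
  have "cball 0 (1 - \<epsilon>) \<subseteq> C n" if "nat \<lceil>21 / e\<rceil> < n" for n
  proof (rule cball_subset_if_support_ge)
    show "convex (C n)" "closed (C n)"
      using that compact_C by (auto simp: C_def compact_imp_closed)
    have "21 / e \<le> real n"
      using that by linarith
    then have "21 \<le> e * real n"
      using \<open>0 < e\<close> by (simp add: field_simps)
    then show "\<exists>x\<in>C n. 1 - \<epsilon> \<le> inner v x" if "norm v = 1" for v :: complex
      using C_support_ge[OF that s \<open>0 < e\<close> _ \<open>21 \<le> e * real n\<close>] \<open>1 - \<epsilon> \<le> 1 - s\<^sup>2 - e\<close>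
      by (force simp: e_def)
  qed
  then show ?thesis
    using C_subset_unit_cball by blast
qed

end
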